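(* For every positive integer $n$, the fan $F_{3n}$ has a vertex-minor isomorphic to a cycle of length $2n+1$.
   Context: Graphs are finite, simple, undirected. The fan $F_m$ is the graph on $m$ vertices with a vertex $c$ (the center) such that $F_m\setminus c$ is a path on $m-1$ vertices and $c$ is adjacent to all other vertices. Local complementation $G*v$ complements the subgraph induced on the neighborhood of $v$; a vertex-minor of $G$ is an induced subgraph of a graph obtained from $G$ by a sequence of local complementations. *)

theory Defs
  imports Main
begin

type_synonym 'a graph = "'a set \<times> 'a set set"

definition verts :: "'a graph \<Rightarrow> 'a set" where "verts G = fst G"
definition edges :: "'a graph \<Rightarrow> 'a set set" where "edges G = snd G"

definition simple_graph :: "'a graph \<Rightarrow> bool" where
  "simple_graph G \<longleftrightarrow> finite (verts G) \<and>
     (\<forall>e\<in>edges G. e \<subseteq> verts G \<and> card e = 2)"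

definition nbhd :: "'a graph \<Rightarrow> 'a \<Rightarrow> 'a set" where
  "nbhd G v = {u \<in> verts G. {u, v} \<in> edges G}"

definition local_comp :: "'a graph \<Rightarrow> 'a \<Rightarrow> 'a graph" where
  "local_comp G v =
     (verts G,
      (edges G - {{x, y} | x y. x \<in> nbhd G v \<and> y \<in> nbhd G v \<and> x \<noteq> y})
      \<union> ({{x, y} | x y. x \<in> nbhd G v \<and> y \<in> nbhd G v \<and> x \<noteq> y} - edges G))"

inductive lc_equiv :: "'a graph \<Rightarrow> 'a graph \<Rightarrow> bool" where
  refl: "lc_equiv G G"
| step: "lc_equiv G H \<Longrightarrow> v \<in> verts H \<Longrightarrow> lc_equiv G (local_comp H v)"

definition induced_subgraph :: "'a graph \<Rightarrow> 'a set \<Rightarrow> 'a graph" where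
  "induced_subgraph G S = (S, {e \<in> edges G. e \<subseteq> S})"

definition vertex_minor :: "'a graph \<Rightarrow> 'a graph \<Rightarrow> bool" where
  "vertex_minor H G \<longleftrightarrow>
     (\<exists>G' S. lc_equiv G G' \<and> S \<subseteq> verts G' \<and> H = induced_subgraph G' S)"

definition graph_iso :: "'a graph \<Rightarrow> 'b graph \<Rightarrow> bool" where
  "graph_iso G H \<longleftrightarrow> (\<exists>f. bij_betw f (verts G) (verts H) \<and>
     (\<forall>x\<in>verts G. \<forall>y\<in>verts G. {x, y} \<in> edges G \<longleftrightarrow> {f x, f y} \<in> edges H))"

definition fan :: "nat \<Rightarrow> nat graph" where
  "fan m = ({0..<m},
     {{0, i} | i. 1 \<le> i \<and> i < m} \<union> {{i, i + 1} | i. 1 \<le> i \<and> i + 1 < m})"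

text \<open>Cycle C_k on vertices 0..k-1 (meaningful for k \<ge> 3).\<close>
definition cycle_graph :: "nat \<Rightarrow> nat graph" where
  "cycle_graph k = ({0..<k}, {{i, (i + 1) mod k} | i. i < k})"

end

theory Submission
  imports Defs
begin

text \<open>Locally complement the fan F_3n at 3, 6, ..., 3(n - 1) in turn. When it is the turn of 3j,
  its neighbourhood is {0, 3j - 1, 3j + 1}, so the complementation deletes the spokes from the
  centre 0 to 3j - 1 and 3j + 1 and joins 3j - 1 to 3j + 1. Deleting the vertices 3, ..., 3(n - 1)
  afterwards leaves the cycle 0, 1, 2, 4, 5, 7, 8, ..., 3n - 2, 3n - 1 of length 2n + 1.\<close>

lemma doubleton_mem_pairs_iff:
  "{a, b} \<in> {{x, y} | x y. x \<in> N \<and> y \<in> N \<and> x \<noteq> y} \<longleftrightarrow> a \<in> N \<and> b \<in> N \<and> a \<noteq> b"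
  by (auto simp: doubleton_eq_iff)

lemma verts_local_comp [simp]: "verts (local_comp G v) = verts G"
  by (simp add: local_comp_def verts_def)

lemma edges_local_comp_iff:
  "{a, b} \<in> edges (local_comp G v) \<longleftrightarrow>
     ({a, b} \<in> edges G) \<noteq> (a \<in> nbhd G v \<and> b \<in> nbhd G v \<and> a \<noteq> b)"
  unfolding local_comp_def edges_def
  using doubleton_mem_pairs_iff[of a b "nbhd G v"] by auto

lemma lc_equiv_foldl_local_comp:
  "set vs \<subseteq> verts G \<Longrightarrow> lc_equiv G (foldl local_comp G vs)"
proof (induction vs rule: rev_induct)
  case Nil
  show ?case by (simp add: lc_equiv.refl)
next
  case (snoc v vs)
  have "verts (foldl local_comp G vs) = verts G"
    by (induction vs arbitrary: G) simp_all
  with snoc show ?case by (auto intro: lc_equiv.step)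
qed

lemma graph_iso_induced_subgraph_image:
  assumes left_inverse: "\<And>i. i \<in> verts C \<Longrightarrow> f (g i) = i"
    and edges_iff: "\<And>i j. i \<in> verts C \<Longrightarrow> j \<in> verts C \<Longrightarrow> {g i, g j} \<in> edges G \<longleftrightarrow> {i, j} \<in> edges C"
  shows "graph_iso (induced_subgraph G (g ` verts C)) C"
  unfolding graph_iso_def
proof (intro exI conjI ballI)
  let ?H = "induced_subgraph G (g ` verts C)"
  have verts_H: "verts ?H = g ` verts C"
    by (simp add: induced_subgraph_def verts_def)
  show "bij_betw f (verts ?H) (verts C)"
    unfolding verts_H by (rule bij_betw_byWitness[where f' = g]) (use left_inverse in auto)
  fix x y assume "x \<in> verts ?H" "y \<in> verts ?H"
  then obtain i j where ij: "i \<in> verts C" "j \<in> verts C" "x = g i" "y = g j"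
    unfolding verts_H by blast
  have "{x, y} \<in> edges ?H \<longleftrightarrow> {g i, g j} \<in> edges G"
    using ij by (auto simp: induced_subgraph_def edges_def)
  also have "\<dots> \<longleftrightarrow> {f x, f y} \<in> edges C"
    using ij by (simp add: edges_iff left_inverse)
  finally show "{x, y} \<in> edges ?H \<longleftrightarrow> {f x, f y} \<in> edges C" .
qed

definition fan_adj :: "nat \<Rightarrow> nat \<Rightarrow> nat \<Rightarrow> bool" where
  "fan_adj m a b \<longleftrightarrow>
     (a = 0 \<and> 1 \<le> b \<and> b < m) \<or> (b = 0 \<and> 1 \<le> a \<and> a < m) \<or>
     (1 \<le> a \<and> b = a + 1 \<and> b < m) \<or> (1 \<le> b \<and> a = b + 1 \<and> a < m)"

lemma edges_fan_iff: "{a, b} \<in> edges (fan m) \<longleftrightarrow> fan_adj m a b"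
  unfolding fan_def edges_def fan_adj_def by (auto simp: doubleton_eq_iff)

definition cycle_adj :: "nat \<Rightarrow> nat \<Rightarrow> nat \<Rightarrow> bool" where
  "cycle_adj K c d \<longleftrightarrow> (c < K \<and> d = (c + 1) mod K) \<or> (d < K \<and> c = (d + 1) mod K)"

lemma verts_cycle_graph: "verts (cycle_graph K) = {0..<K}"
  by (simp add: cycle_graph_def verts_def)

lemma edges_cycle_graph_iff: "{c, d} \<in> edges (cycle_graph K) \<longleftrightarrow> cycle_adj K c d"
  unfolding cycle_graph_def edges_def cycle_adj_def by (auto simp: doubleton_eq_iff)

lemma cycle_adj_iff:
  "c < K \<Longrightarrow> d < K \<Longrightarrow>
     cycle_adj K c d \<longleftrightarrow> d = c + 1 \<or> c = d + 1 \<or> (c + 1 = K \<and> d = 0) \<or> (d + 1 = K \<and> c = 0)"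
  unfolding cycle_adj_def by (auto simp: mod_if)

definition fan_comp :: "nat \<Rightarrow> nat \<Rightarrow> nat graph" where
  "fan_comp m k = foldl local_comp (fan m) (map (\<lambda>j. 3 * j) [1..<Suc k])"

lemma fan_comp_0: "fan_comp m 0 = fan m"
  by (simp add: fan_comp_def)

lemma fan_comp_Suc: "fan_comp m (Suc k) = local_comp (fan_comp m k) (3 * k + 3)"
  by (simp add: fan_comp_def add.commute)

lemma verts_fan_comp: "verts (fan_comp m k) = {0..<m}"
  by (induction k) (simp_all add: fan_comp_0 fan_comp_Suc, simp add: fan_def verts_def)

lemma lc_equiv_fan_comp: "3 * k < m \<Longrightarrow> lc_equiv (fan m) (fan_comp m k)"
  unfolding fan_comp_def
  by (rule lc_equiv_foldl_local_comp) (auto simp: fan_def verts_def)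

text \<open>The fan without the spokes from 0 to 3j - 1 and 3j + 1, and with the chords from 3j - 1
  to 3j + 1, for 1 \<le> j \<le> k.\<close>
definition fan_comp_adj :: "nat \<Rightarrow> nat \<Rightarrow> nat \<Rightarrow> nat \<Rightarrow> bool" where
  "fan_comp_adj m k a b \<longleftrightarrow>
     (fan_adj m a b \<and>
        \<not> ((a = 0 \<and> b mod 3 \<noteq> 0 \<and> 2 \<le> b \<and> b \<le> 3 * k + 1) \<or>
           (b = 0 \<and> a mod 3 \<noteq> 0 \<and> 2 \<le> a \<and> a \<le> 3 * k + 1))) \<or>
     (a mod 3 = 2 \<and> b = a + 2 \<and> b \<le> 3 * k + 1) \<or>
     (b mod 3 = 2 \<and> a = b + 2 \<and> a \<le> 3 * k + 1)"

lemma fan_comp_adj_nbhd: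
  "3 * k + 4 < m \<Longrightarrow> {u. u < m \<and> fan_comp_adj m k u (3 * k + 3)} = {0, 3 * k + 2, 3 * k + 4}"
  unfolding fan_comp_adj_def fan_adj_def by (auto; presburger)

lemma fan_comp_adj_Suc:
  assumes "3 * k + 4 < m"
  shows "fan_comp_adj m (Suc k) a b \<longleftrightarrow>
    fan_comp_adj m k a b \<noteq>
      (a \<in> {0, 3 * k + 2, 3 * k + 4} \<and> b \<in> {0, 3 * k + 2, 3 * k + 4} \<and> a \<noteq> b)"
proof (cases "a \<in> {0, 3 * k + 2, 3 * k + 4} \<and> b \<in> {0, 3 * k + 2, 3 * k + 4} \<and> a \<noteq> b")
  case True
  have mods: "(3 * k + 2) mod 3 = (2::nat)" "(3 * k + 4) mod 3 = (1::nat)"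
    by presburger+
  from True consider
      "a = 0" "b = 3 * k + 2" | "a = 0" "b = 3 * k + 4" | "a = 3 * k + 2" "b = 0"
    | "a = 3 * k + 4" "b = 0" | "a = 3 * k + 2" "b = 3 * k + 4" | "a = 3 * k + 4" "b = 3 * k + 2"
    by auto
  then show ?thesis
    by cases (use True assms mods in \<open>simp_all add: fan_comp_adj_def fan_adj_def\<close>)
next
  case False
  have spokes: "(c mod 3 \<noteq> 0 \<and> 2 \<le> c \<and> c \<le> 3 * Suc k + 1) \<longleftrightarrow>
      (c mod 3 \<noteq> 0 \<and> 2 \<le> c \<and> c \<le> 3 * k + 1) \<or> c = 3 * k + 2 \<or> c = 3 * k + 4" for c :: nat
    by presburger
  have chords: "(c mod 3 = 2 \<and> d = c + 2 \<and> d \<le> 3 * Suc k + 1) \<longleftrightarrow>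
      (c mod 3 = 2 \<and> d = c + 2 \<and> d \<le> 3 * k + 1) \<or> (c = 3 * k + 2 \<and> d = 3 * k + 4)" for c d :: nat
    by presburger
  show ?thesis
    using False unfolding fan_comp_adj_def spokes chords by auto
qed

lemma edges_fan_comp_iff:
  "3 * k + 1 < m \<Longrightarrow> {a, b} \<in> edges (fan_comp m k) \<longleftrightarrow> fan_comp_adj m k a b"
proof (induction k arbitrary: a b)
  case 0
  then show ?case by (auto simp: fan_comp_0 edges_fan_iff fan_comp_adj_def)
next
  case (Suc k)
  then have m: "3 * k + 4 < m" by simp
  have "nbhd (fan_comp m k) (3 * k + 3) = {0, 3 * k + 2, 3 * k + 4}"
    using fan_comp_adj_nbhd[OF m] Suc.IH m unfolding nbhd_def verts_fan_comp by simp
  then show ?case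
    using Suc.IH m by (simp add: fan_comp_Suc edges_local_comp_iff fan_comp_adj_Suc)
qed

text \<open>The i-th vertex of the cycle 0, 1, 2, 4, 5, 7, 8, ..., i.e. of the non-multiples of 3
  together with 0.\<close>
definition fan_cycle_vertex :: "nat \<Rightarrow> nat" where
  "fan_cycle_vertex i = i + (i - 1) div 2"

lemma fan_cycle_vertex_cases:
  fixes i :: nat
  obtains "i = 0" "fan_cycle_vertex i = 0"
    | p where "i = 2 * p + 1" "fan_cycle_vertex i = 3 * p + 1"
    | p where "i = 2 * p + 2" "fan_cycle_vertex i = 3 * p + 2"
proof -
  have "i = 0 \<or> (\<exists>p. i = 2 * p + 1) \<or> (\<exists>p. i = 2 * p + 2)"
    by presburger
  then show thesis
    using that unfolding fan_cycle_vertex_def by auto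
qed

lemma fan_cycle_vertex_less: "i < 2 * n + 1 \<Longrightarrow> 0 < n \<Longrightarrow> fan_cycle_vertex i < 3 * n"
  by (cases i rule: fan_cycle_vertex_cases) simp_all

lemma fan_cycle_vertex_inverse: "fan_cycle_vertex i - fan_cycle_vertex i div 3 = i"
  by (cases i rule: fan_cycle_vertex_cases) simp_all

lemma mod_3_simps:
  "Suc (3 * q) mod 3 = 1" "Suc (Suc (3 * q)) mod 3 = 2"
  by arith+

lemma fan_comp_adj_fan_cycle_vertex:
  assumes "i < 2 * Suc k + 1" "j < 2 * Suc k + 1"
  shows "fan_comp_adj (3 * Suc k) k (fan_cycle_vertex i) (fan_cycle_vertex j) \<longleftrightarrow>
    cycle_adj (2 * Suc k + 1) i j"
  using assms
  by (cases i rule: fan_cycle_vertex_cases; cases j rule: fan_cycle_vertex_cases;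
      simp only: cycle_adj_iff; auto simp: fan_comp_adj_def fan_adj_def mod_3_simps; presburger)

theorem lemma4p2:
  fixes n :: nat
  assumes "n \<ge> 1"
  shows "\<exists>H. vertex_minor H (fan (3 * n)) \<and> graph_iso H (cycle_graph (2 * n + 1))"
proof -
  obtain k where n: "n = Suc k" using assms by (cases n) auto
  let ?C = "cycle_graph (2 * n + 1)"
  let ?G = "fan_comp (3 * n) k"
  let ?S = "fan_cycle_vertex ` verts ?C"
  have "lc_equiv (fan (3 * n)) ?G"
    using n by (intro lc_equiv_fan_comp) simp
  moreover have "?S \<subseteq> verts ?G"
    using assms fan_cycle_vertex_less by (auto simp: verts_cycle_graph verts_fan_comp)
  ultimately have "vertex_minor (induced_subgraph ?G ?S) (fan (3 * n))"
    unfolding vertex_minor_def by blast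
  moreover have "graph_iso (induced_subgraph ?G ?S) ?C"
  proof (rule graph_iso_induced_subgraph_image[where f = "\<lambda>x. x - x div 3"])
    fix i j assume "i \<in> verts ?C" "j \<in> verts ?C"
    then have ij: "i < 2 * Suc k + 1" "j < 2 * Suc k + 1"
      unfolding n verts_cycle_graph by simp_all
    have "{fan_cycle_vertex i, fan_cycle_vertex j} \<in> edges ?G \<longleftrightarrow>
        fan_comp_adj (3 * n) k (fan_cycle_vertex i) (fan_cycle_vertex j)"
      using n by (intro edges_fan_comp_iff) simp
    also have "\<dots> \<longleftrightarrow> cycle_adj (2 * n + 1) i j"
      unfolding n using ij by (rule fan_comp_adj_fan_cycle_vertex)
    finally show "{fan_cycle_vertex i, fan_cycle_vertex j} \<in> edges ?G \<longleftrightarrow> {i, j} \<in> edges ?C"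
      by (simp add: edges_cycle_graph_iff)
  qed (rule fan_cycle_vertex_inverse)
  ultimately show ?thesis by blast
qed

end
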